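(* Let $n$ be a positive integer and let $\mathcal M_{n^2}$ be the set of integer matrices $\begin{pmatrix}a&b\\c&d\end{pmatrix}$ with $ad-bc=n^2$ and $\gcd(a,b,c,d)=1$. A complete set of representatives of the inequivalent parabolic elements of $\mathcal M_{n^2}$ is $$\begin{pmatrix}n&a\\0&n\end{pmatrix},\qquad a=1,\dots,n,\ \gcd(a,n)=1.$$
   Context: An element of $\mathcal M_{n^2}$ is parabolic if it fixes exactly one point of $\mathbb P^1(\mathbb Q)$ and no other point of $\mathbb P^1(\mathbb C)$ (a single cusp). Two parabolic elements $\gamma_1,\gamma_2$ are equivalent if there exist $\sigma\in\mathrm{SL}(2,\mathbb Z)$ and $\alpha$ in the stabilizer in $\mathrm{SL}(2,\mathbb Z)$ of the cusp fixed by $\gamma_2$ such that $\sigma\gamma_1\sigma^{-1}=\alpha\gamma_2$. *)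

theory Defs
  imports "HOL-Analysis.Analysis"
begin

text \<open>2x2 integer matrices are elements of int^2^2; entries A$1$1 = a, A$1$2 = b,
  A$2$1 = c, A$2$2 = d.\<close>

definition mat2 :: "int \<Rightarrow> int \<Rightarrow> int \<Rightarrow> int \<Rightarrow> int^2^2" where
  "mat2 a b c d = vector [vector [a, b], vector [c, d]]"

definition Mset :: "int \<Rightarrow> (int^2^2) set" where
  "Mset m = {A. det A = m \<and>
     gcd (gcd (A$1$1) (A$1$2)) (gcd (A$2$1) (A$2$2)) = 1}"

definition SL2Z :: "(int^2^2) set" where
  "SL2Z = {A. det A = 1}"

text \<open>A fixes the point [x:y] of P^1(C) (homogeneous coordinates, (x,y) nonzero)
  under the Moebius action z \<mapsto> (az+b)/(cz+d), i.e. A (x,y)^T is proportional to (x,y)^T.\<close>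
definition fixes_pt :: "int^2^2 \<Rightarrow> complex \<Rightarrow> complex \<Rightarrow> bool" where
  "fixes_pt A x y \<longleftrightarrow> (x, y) \<noteq> (0, 0) \<and>
     (of_int (A$1$1) * x + of_int (A$1$2) * y) * y = (of_int (A$2$1) * x + of_int (A$2$2) * y) * x"

text \<open>Parabolic: fixes exactly one point of P^1(Q) and no other point of P^1(C):
  there is a rational point [p:q] fixed by A and every fixed point [x:y] in P^1(C)
  equals [p:q].\<close>
definition parabolic :: "int^2^2 \<Rightarrow> bool" where
  "parabolic A \<longleftrightarrow> (\<exists>p q :: rat. fixes_pt A (of_rat p) (of_rat q) \<and>
     (\<forall>x y. fixes_pt A x y \<longrightarrow> x * of_rat q = y * of_rat p))"

text \<open>Equivalence: exist sigma in SL2(Z) and alpha in SL2(Z) stabilising the cusp fixed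
  by g2 (for parabolic g2, its fixed points in P^1(C) are exactly that cusp) with
  sigma g1 sigma^{-1} = alpha g2, written without inverse as sigma g1 = alpha g2 sigma.\<close>
definition parab_equiv :: "int^2^2 \<Rightarrow> int^2^2 \<Rightarrow> bool" where
  "parab_equiv g1 g2 \<longleftrightarrow> (\<exists>\<sigma> \<alpha>. \<sigma> \<in> SL2Z \<and> \<alpha> \<in> SL2Z \<and>
     (\<forall>x y. fixes_pt g2 x y \<longrightarrow> fixes_pt \<alpha> x y) \<and>
     \<sigma> ** g1 = \<alpha> ** g2 ** \<sigma>)"

end

theory Submission
  imports Defs
begin

text \<open>A parabolic element g has a single cusp, given by a primitive integer vector (u, v).
  Completing (u, v) to a matrix of SL2(Z) moves this cusp to infinity, so g is conjugate
  to an upper triangular matrix; its diagonal entries coincide, since otherwise it would fix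
  a second point, and the determinant n^2 forces them to be n or -n. Primitivity of g makes
  the upper right entry coprime to n, and a translation from the stabiliser of infinity
  reduces it into 1..n. Conversely, a conjugation between two such representatives must
  fix infinity, which forces their upper right entries to agree modulo n.\<close>

lemma mat2_nth [simp]:
  "mat2 a b c d $1$1 = a" "mat2 a b c d $1$2 = b" "mat2 a b c d $2$1 = c" "mat2 a b c d $2$2 = d"
  by (simp_all add: mat2_def)

lemma mat2_entries: "(A::int^2^2) = mat2 (A$1$1) (A$1$2) (A$2$1) (A$2$2)"
  by (simp add: vec_eq_iff forall_2)

lemma mat2_eq_iff: "mat2 a b c d = mat2 a' b' c' d' \<longleftrightarrow> a = a' \<and> b = b' \<and> c = c' \<and> d = d'"
  by (metis mat2_nth)

lemma mat2_mult:
  "mat2 a b c d ** mat2 e f g h = mat2 (a*e + b*g) (a*f + b*h) (c*e + d*g) (c*f + d*h)"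
  by (simp add: vec_eq_iff forall_2 matrix_matrix_mult_def sum_2)

lemma mat2_det: "det (mat2 a b c d) = a*d - b*c"
  by (simp add: det_2)

lemma mat2_mult_adjugate:
  assumes "a*d - b*c = 1"
  shows "mat2 a b c d ** mat2 d (-b) (-c) a = mat 1" "mat2 d (-b) (-c) a ** mat2 a b c d = mat 1"
proof -
  have "mat2 1 0 0 1 = (mat 1 :: int^2^2)"
    by (simp add: vec_eq_iff forall_2 mat_def)
  then show "mat2 a b c d ** mat2 d (-b) (-c) a = mat 1" "mat2 d (-b) (-c) a ** mat2 a b c d = mat 1"
    using assms by (simp_all add: mat2_mult algebra_simps)
qed

lemma dvd_matrix_mult_left:
  fixes A :: "'a::comm_ring_1^'n^'m" and B :: "'a^'p^'n"
  assumes "\<And>i j. d dvd A$i$j"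
  shows "d dvd (A ** B)$i$j"
  by (simp add: matrix_matrix_mult_def assms dvd_sum)

lemma dvd_matrix_mult_right:
  fixes A :: "'a::comm_ring_1^'n^'m" and B :: "'a^'p^'n"
  assumes "\<And>i j. d dvd B$i$j"
  shows "d dvd (A ** B)$i$j"
  by (simp add: matrix_matrix_mult_def assms dvd_sum)

lemma Mset_common_divisor_unit:
  assumes "g \<in> Mset m" "\<And>i j. d dvd g$i$j"
  shows "is_unit d"
proof -
  have "d dvd gcd (gcd (g$1$1) (g$1$2)) (gcd (g$2$1) (g$2$2))"
    using assms(2) by simp
  also have "\<dots> = 1"
    using assms(1) by (simp add: Mset_def)
  finally show ?thesis
    by simp
qed

lemma fixes_pt_mult_iff:
  assumes "c \<noteq> 0"
  shows "fixes_pt A (c*x) (c*y) \<longleftrightarrow> fixes_pt A x y"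
proof -
  have scale: "(a * (c*x) + b * (c*y)) * (c*y) = (d * (c*x) + e * (c*y)) * (c*x)
                 \<longleftrightarrow> (a*x + b*y) * y = (d*x + e*y) * x" for a b d e
  proof -
    have "(a * (c*x) + b * (c*y)) * (c*y) = (d * (c*x) + e * (c*y)) * (c*x)
            \<longleftrightarrow> c^2 * ((a*x + b*y) * y) = c^2 * ((d*x + e*y) * x)"
      by (simp add: power2_eq_square algebra_simps)
    then show ?thesis
      using assms by simp
  qed
  show ?thesis
    using assms unfolding fixes_pt_def scale by simp
qed

lemma fixes_pt_infinity_iff:
  assumes "x \<noteq> 0"
  shows "fixes_pt A x 0 \<longleftrightarrow> A$2$1 = 0"
  using assms by (simp add: fixes_pt_def)

lemma fixes_pt_translation_iff:
  assumes "b \<noteq> 0"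
  shows "fixes_pt (mat2 m b 0 m) x y \<longleftrightarrow> x \<noteq> 0 \<and> y = 0"
proof -
  have "fixes_pt (mat2 m b 0 m) x y \<longleftrightarrow> (x, y) \<noteq> (0, 0) \<and> of_int b * y * y = 0"
    by (simp add: fixes_pt_def algebra_simps)
  then show ?thesis
    using assms by auto
qed

lemma scalar_translation_in_Mset:
  assumes "coprime m b"
  shows "mat2 m b 0 m \<in> Mset (m ^ 2)"
  using assms by (simp add: Mset_def mat2_det power2_eq_square coprime_iff_gcd_eq_1)

lemma parabolic_scalar_translation:
  assumes "b \<noteq> 0"
  shows "parabolic (mat2 m b 0 m)"
  unfolding parabolic_def
proof (intro exI conjI allI impI)
  show "fixes_pt (mat2 m b 0 m) (of_rat 1) (of_rat 0)"
    using assms by (simp add: fixes_pt_translation_iff)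
  fix x y
  assume "fixes_pt (mat2 m b 0 m) x y"
  then show "x * of_rat 0 = y * of_rat 1"
    using assms by (simp add: fixes_pt_translation_iff)
qed

lemma fixes_pt_conj:
  fixes g h \<tau> :: "int^2^2"
  assumes conj: "\<tau> ** h = g ** \<tau>" and det_nz: "det \<tau> \<noteq> 0" and fixed: "fixes_pt h x y"
  shows "fixes_pt g (of_int (\<tau>$1$1) * x + of_int (\<tau>$1$2) * y) (of_int (\<tau>$2$1) * x + of_int (\<tau>$2$2) * y)"
proof -
  obtain t1 t2 t3 t4 where t: "\<tau> = mat2 t1 t2 t3 t4" using mat2_entries by blast
  obtain h1 h2 h3 h4 where h: "h = mat2 h1 h2 h3 h4" using mat2_entries by blast
  obtain g1 g2 g3 g4 where g: "g = mat2 g1 g2 g3 g4" using mat2_entries by blast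
  have "t1*h1 + t2*h3 = g1*t1 + g2*t3" "t1*h2 + t2*h4 = g1*t2 + g2*t4"
       "t3*h1 + t4*h3 = g3*t1 + g4*t3" "t3*h2 + t4*h4 = g3*t2 + g4*t4"
    using conj by (simp_all add: t h g mat2_mult mat2_eq_iff)
  then have e: "of_int t1 * of_int h1 + of_int t2 * of_int h3 = of_int g1 * of_int t1 + of_int g2 * (of_int t3 :: complex)"
       "of_int t1 * of_int h2 + of_int t2 * of_int h4 = of_int g1 * of_int t2 + of_int g2 * (of_int t4 :: complex)"
       "of_int t3 * of_int h1 + of_int t4 * of_int h3 = of_int g3 * of_int t1 + of_int g4 * (of_int t3 :: complex)"
       "of_int t3 * of_int h2 + of_int t4 * of_int h4 = of_int g3 * of_int t2 + of_int g4 * (of_int t4 :: complex)"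
    by (metis of_int_add of_int_mult)+
  have d: "of_int t1 * of_int t4 - of_int t2 * of_int t3 \<noteq> (0::complex)"
    using det_nz by (simp add: t mat2_det flip: of_int_mult of_int_diff)
  have hxy: "(of_int h1 * x + of_int h2 * y) * y = (of_int h3 * x + of_int h4 * y) * x" "(x, y) \<noteq> (0, 0)"
    using fixed by (simp_all add: fixes_pt_def h)
  have "(of_int t1 * x + of_int t2 * y, of_int t3 * x + of_int t4 * y) \<noteq> (0, 0)"
  proof
    assume "(of_int t1 * x + of_int t2 * y, of_int t3 * x + of_int t4 * y) = (0, 0)"
    then have "of_int t1 * x + of_int t2 * y = 0" "of_int t3 * x + of_int t4 * y = 0"
      by simp_all
    then have "(of_int t1 * of_int t4 - of_int t2 * of_int t3) * x = 0"
              "(of_int t1 * of_int t4 - of_int t2 * of_int t3) * y = 0"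
      by algebra+
    then show False using d hxy(2) by simp
  qed
  moreover have "(of_int g1 * (of_int t1 * x + of_int t2 * y) + of_int g2 * (of_int t3 * x + of_int t4 * y)) * (of_int t3 * x + of_int t4 * y)
      = (of_int g3 * (of_int t1 * x + of_int t2 * y) + of_int g4 * (of_int t3 * x + of_int t4 * y)) * (of_int t1 * x + of_int t2 * y)"
    using e hxy(1) by algebra
  ultimately show ?thesis
    by (simp add: fixes_pt_def t g)
qed

lemma parabolic_fixes_proportional:
  assumes "parabolic g" "fixes_pt g x1 y1" "fixes_pt g x2 y2"
  shows "x1 * y2 = y1 * x2"
proof -
  obtain p q :: rat where pq: "fixes_pt g (of_rat p) (of_rat q)"
    and uniq: "\<And>x y. fixes_pt g x y \<Longrightarrow> x * of_rat q = y * of_rat p"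
    using assms(1) unfolding parabolic_def by blast
  have "(of_rat p, of_rat q) \<noteq> (0, 0 :: complex)"
    using pq by (simp add: fixes_pt_def)
  moreover have "x1 * of_rat q = y1 * of_rat p" "x2 * of_rat q = y2 * of_rat p"
    using uniq assms(2,3) by blast+
  then have "(x1 * y2 - y1 * x2) * of_rat q = 0" "(x1 * y2 - y1 * x2) * of_rat p = 0"
    by algebra+
  ultimately show ?thesis
    by auto
qed

lemma parabolic_conj_fixes_proportional:
  fixes g h \<tau> :: "int^2^2"
  assumes "parabolic g" "\<tau> ** h = g ** \<tau>" "det \<tau> \<noteq> 0" "fixes_pt h x1 y1" "fixes_pt h x2 y2"
  shows "x1 * y2 = y1 * x2"
proof -
  define t1 t2 t3 t4 :: complex
    where "t1 = of_int (\<tau>$1$1)" and "t2 = of_int (\<tau>$1$2)" and "t3 = of_int (\<tau>$2$1)" and "t4 = of_int (\<tau>$2$2)"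
  have "(t1 * x1 + t2 * y1) * (t3 * x2 + t4 * y2) = (t3 * x1 + t4 * y1) * (t1 * x2 + t2 * y2)"
    using parabolic_fixes_proportional[OF assms(1) fixes_pt_conj[OF assms(2,3,4)] fixes_pt_conj[OF assms(2,3,5)]]
    by (simp add: t1_def t2_def t3_def t4_def)
  then have "(t1 * t4 - t2 * t3) * (x1 * y2 - y1 * x2) = 0"
    by algebra
  moreover have "t1 * t4 - t2 * t3 \<noteq> 0"
    using assms(3) by (simp add: t1_def t2_def t3_def t4_def det_2 flip: of_int_mult of_int_diff)
  ultimately show ?thesis
    by simp
qed

lemma rat_pair_primitive:
  fixes p q :: rat
  assumes "(p, q) \<noteq> (0, 0)"
  obtains c :: rat and u v :: int where "c \<noteq> 0" "coprime u v" "p = c * of_int u" "q = c * of_int v"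
proof -
  obtain a1 b1 where q1: "quotient_of p = (a1, b1)" by (cases "quotient_of p") auto
  obtain a2 b2 where q2: "quotient_of q = (a2, b2)" by (cases "quotient_of q") auto
  have b: "b1 > 0" "b2 > 0"
    using q1 q2 quotient_of_denom_pos by blast+
  have pq: "p = of_int (a1 * b2) / of_int (b1 * b2)" "q = of_int (a2 * b1) / of_int (b1 * b2)"
    using q1 q2 b by (simp_all add: quotient_of_div)
  define k where "k = gcd (a1 * b2) (a2 * b1)"
  have "a1 * b2 \<noteq> 0 \<or> a2 * b1 \<noteq> 0"
    using assms pq b by auto
  then have k: "k \<noteq> 0" "coprime (a1 * b2 div k) (a2 * b1 div k)"
    unfolding k_def by (simp_all add: div_gcd_coprime)
  show ?thesis
  proof
    show "of_int k / of_int (b1 * b2) \<noteq> (0 :: rat)"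
      using k b by simp
    show "p = of_int k / of_int (b1 * b2) * of_int (a1 * b2 div k)"
      using pq by (simp add: k_def flip: of_int_mult)
    show "q = of_int k / of_int (b1 * b2) * of_int (a2 * b1 div k)"
      using pq by (simp add: k_def flip: of_int_mult)
  qed (rule k(2))
qed

lemma parabolic_fixes_primitive:
  assumes "parabolic g"
  obtains u v :: int where "coprime u v" "fixes_pt g (of_int u) (of_int v)"
proof -
  obtain p q :: rat where pq: "fixes_pt g (of_rat p) (of_rat q)"
    using assms unfolding parabolic_def by blast
  then have "(p, q) \<noteq> (0, 0)"
    by (auto simp: fixes_pt_def)
  then obtain c u v where "c \<noteq> 0" "coprime u v" "p = c * of_int u" "q = c * of_int v"
    by (rule rat_pair_primitive)
  moreover from this have "fixes_pt g (of_rat c * of_int u) (of_rat c * of_int v)"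
    using pq by (simp add: of_rat_mult)
  ultimately show ?thesis
    using that fixes_pt_mult_iff[of "of_rat c"] by simp
qed

lemma coprime_unimodular_completion:
  fixes u v :: int
  assumes "coprime u v"
  obtains r s where "u * s - r * v = 1"
proof -
  obtain s r' where "s * u + r' * v = gcd u v"
    using bezout_int by blast
  with assms have "u * s - (- r') * v = 1"
    by (simp add: algebra_simps)
  then show ?thesis
    by (rule that)
qed

lemma parabolic_SL2Z_conj_scalar_translation:
  assumes "parabolic g"
  obtains \<sigma> \<tau> L M where "\<sigma> \<in> SL2Z" "\<tau> ** \<sigma> = mat 1" "\<sigma> ** \<tau> = mat 1" "\<sigma> ** g ** \<tau> = mat2 L M 0 L"
proof -
  obtain u v where uv: "coprime u v" and fixed: "fixes_pt g (of_int u) (of_int v)"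
    using assms by (rule parabolic_fixes_primitive)
  obtain r s where rs: "u * s - r * v = 1"
    using uv by (rule coprime_unimodular_completion)
  define \<sigma> where "\<sigma> = mat2 s (-r) (-v) u"
  define \<tau> where "\<tau> = mat2 u r v s"
  define h where "h = \<sigma> ** g ** \<tau>"
  have inv: "\<tau> ** \<sigma> = mat 1" "\<sigma> ** \<tau> = mat 1"
    using mat2_mult_adjugate[OF rs] by (simp_all add: \<sigma>_def \<tau>_def)
  have det_one: "det \<sigma> = 1" "det \<tau> = 1"
    using rs by (simp_all add: \<sigma>_def \<tau>_def mat2_det algebra_simps)
  have "h ** \<sigma> = (\<sigma> ** g) ** (\<tau> ** \<sigma>)" "\<tau> ** h = (\<tau> ** \<sigma>) ** (g ** \<tau>)"
    by (simp_all add: h_def matrix_mul_assoc)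
  then have \<sigma>_conj: "\<sigma> ** g = h ** \<sigma>" and \<tau>_conj: "\<tau> ** h = g ** \<tau>"
    by (simp_all add: inv matrix_mul_lid matrix_mul_rid)
  have "of_int s * of_int u + of_int (- r) * of_int v = (1 :: complex)"
    using rs by (simp add: algebra_simps flip: of_int_mult of_int_diff)
  then have h_infinity: "fixes_pt h 1 0"
    using fixes_pt_conj[OF \<sigma>_conj _ fixed] det_one by (simp add: \<sigma>_def)
  then obtain L M N where h: "h = mat2 L M 0 N"
    using mat2_entries[of h] fixes_pt_infinity_iff[of 1 h] by auto
  have "L = N"
  proof (rule ccontr)
    assume "L \<noteq> N"
    then have "fixes_pt h (of_int M) (of_int (N - L))"
      by (simp add: fixes_pt_def h algebra_simps)
    moreover have "det \<tau> \<noteq> 0"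
      using det_one by simp
    ultimately have "1 * of_int (N - L) = 0 * (of_int M :: complex)"
      using parabolic_conj_fixes_proportional[OF assms \<tau>_conj _ h_infinity] by blast
    with \<open>L \<noteq> N\<close> show False
      by simp
  qed
  moreover have "\<sigma> \<in> SL2Z"
    using det_one by (simp add: SL2Z_def)
  ultimately show ?thesis
    using that[of \<sigma> \<tau> L M] inv h h_def by simp
qed

lemma Mset_conj_scalar_translation:
  assumes "g \<in> Mset (int n ^ 2)" "\<tau> ** \<sigma> = mat 1" "\<sigma> ** \<tau> = mat 1"
    and h: "\<sigma> ** g ** \<tau> = mat2 L M 0 L"
  shows "L = int n \<or> L = - int n" "coprime M (int n)"
proof -
  have "det \<sigma> * det \<tau> = 1"
    using det_mul[of \<sigma> \<tau>] assms(3) by simp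
  then have "det (\<sigma> ** g ** \<tau>) = det g"
    by (simp add: det_mul)
  then have "L * L = int n * int n"
    using assms(1) h by (simp add: Mset_def mat2_det power2_eq_square)
  then show L: "L = int n \<or> L = - int n"
    by (simp add: square_eq_iff)
  have g: "\<tau> ** (\<sigma> ** g ** \<tau>) ** \<sigma> = g"
  proof -
    have "\<tau> ** (\<sigma> ** g ** \<tau>) ** \<sigma> = (\<tau> ** \<sigma>) ** g ** (\<tau> ** \<sigma>)"
      by (simp add: matrix_mul_assoc)
    then show ?thesis
      using assms(2) by (simp add: matrix_mul_lid matrix_mul_rid)
  qed
  show "coprime M (int n)"
  proof (rule coprimeI)
    fix d
    assume "d dvd M" "d dvd int n"
    with L have "d dvd L"
      by auto
    with \<open>d dvd M\<close> have "d dvd (\<sigma> ** g ** \<tau>)$i$j" for i j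
      using exhaust_2[of i] exhaust_2[of j] by (auto simp: h)
    then have "d dvd (\<tau> ** (\<sigma> ** g ** \<tau>))$i$j" for i j
      by (rule dvd_matrix_mult_right)
    then have "d dvd g$i$j" for i j
      by (subst g[symmetric]) (rule dvd_matrix_mult_left)
    then show "is_unit d"
      using assms(1) by (rule Mset_common_divisor_unit[rotated])
  qed
qed

lemma scalar_translation_normal_form:
  fixes n :: nat
  assumes "n > 0" "L = int n \<or> L = - int n" "coprime M (int n)"
  obtains \<alpha> b where "\<alpha> \<in> SL2Z" "\<alpha>$2$1 = 0" "1 \<le> b" "b \<le> n" "coprime b n"
    "mat2 L M 0 L = \<alpha> ** mat2 (int n) (int b) 0 (int n)"
proof -
  define e :: int where "e = (if L = int n then 1 else -1)"
  define c where "c = e * M"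
  define t where "t = (c - 1) div int n"
  define b where "b = nat ((c - 1) mod int n + 1)"
  have e: "e * e = 1" "L = e * int n"
    using assms(2) by (auto simp: e_def)
  have b: "int b = (c - 1) mod int n + 1"
    using assms(1) by (simp add: b_def)
  then have c: "c = int b + t * int n"
    by (simp add: t_def)
  have "0 \<le> (c - 1) mod int n" "(c - 1) mod int n < int n"
    using assms(1) by simp_all
  with b have "1 \<le> b" "b \<le> n"
    by linarith+
  moreover have "coprime (int b) (int n)"
  proof (rule coprimeI)
    fix d
    assume "d dvd int b" "d dvd int n"
    then have "d dvd c"
      by (simp add: c)
    moreover have "coprime c (int n)"
      using assms(3) e(1) by (auto simp: c_def e_def)
    ultimately show "is_unit d"
      using \<open>d dvd int n\<close> coprime_common_divisor by blast
  qed
  moreover have "mat2 e (e * t) 0 e \<in> SL2Z"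
    using e(1) by (simp add: SL2Z_def mat2_det)
  moreover have "mat2 L M 0 L = mat2 e (e * t) 0 e ** mat2 (int n) (int b) 0 (int n)"
  proof -
    have "M = e * c"
      using e(1) unfolding c_def by (metis mult.assoc mult_1)
    then show ?thesis
      using e(2) by (simp add: mat2_mult mat2_eq_iff c algebra_simps)
  qed
  ultimately show ?thesis
    using that by simp
qed

lemma fixes_pt_of_scalar_translation:
  assumes "b \<noteq> 0" "\<alpha>$2$1 = 0" "fixes_pt (mat2 m b 0 m) x y"
  shows "fixes_pt \<alpha> x y"
  using assms fixes_pt_infinity_iff by (auto simp: fixes_pt_translation_iff)

lemma SL2Z_upper_triangular:
  assumes "\<alpha> \<in> SL2Z" "\<alpha>$2$1 = 0"
  obtains e k where "e = 1 \<or> e = -1" "\<alpha> = mat2 e k 0 e"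
proof -
  have "\<alpha>$1$1 * \<alpha>$2$2 = 1"
    using assms mat2_entries[of \<alpha>] by (metis SL2Z_def mat2_det mem_Collect_eq mult_zero_right diff_zero)
  then have "\<alpha>$1$1 = \<alpha>$2$2" "\<alpha>$2$2 = 1 \<or> \<alpha>$2$2 = -1"
    by (auto simp: zmult_eq_1_iff)
  then show ?thesis
    using that[of "\<alpha>$2$2" "\<alpha>$1$2"] mat2_entries[of \<alpha>] assms(2) by simp
qed

lemma SL2Z_conj_scalar_translation:
  assumes "\<sigma> \<in> SL2Z" "\<sigma> ** mat2 m a 0 m = mat2 e k 0 e ** mat2 m b 0 m ** \<sigma>"
    and "e = 1 \<or> e = -1" "m \<noteq> 0" "a \<noteq> 0"
  shows "a = b + k * m"
proof -
  obtain w1 w2 w3 w4 where \<sigma>: "\<sigma> = mat2 w1 w2 w3 w4"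
    using mat2_entries by blast
  have det: "w1 * w4 - w2 * w3 = 1"
    using assms(1) by (simp add: \<sigma> SL2Z_def mat2_det)
  have eqs: "a * w1 + m * w2 = e * m * w2 + (e * b + k * m) * w4"
    "m * w3 = e * m * w3" "a * w3 + m * w4 = e * m * w4"
    using assms(2) by (simp_all add: \<sigma> mat2_mult mat2_eq_iff algebra_simps)
  show ?thesis
    using assms(3)
  proof
    assume "e = 1"
    with eqs(3) assms(5) have "w3 = 0"
      by simp
    with det have "w1 = w4" "w4 = 1 \<or> w4 = -1"
      by (auto simp: zmult_eq_1_iff)
    with eqs(1) \<open>e = 1\<close> \<open>w3 = 0\<close> show ?thesis
      by auto
  next
    assume "e = -1"
    with eqs(2,3) assms(4) have "w3 = 0" "w4 = 0"
      by simp_all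
    with det show ?thesis
      by simp
  qed
qed

lemma Mset_parabolic_equiv_scalar_translation:
  fixes n :: nat
  assumes "n > 0" "g \<in> Mset (int n ^ 2)" "parabolic g"
  obtains b where "1 \<le> b" "b \<le> n" "coprime b n" "parab_equiv g (mat2 (int n) (int b) 0 (int n))"
proof -
  obtain \<sigma> \<tau> L M where \<sigma>: "\<sigma> \<in> SL2Z" and inv: "\<tau> ** \<sigma> = mat 1" "\<sigma> ** \<tau> = mat 1"
    and h: "\<sigma> ** g ** \<tau> = mat2 L M 0 L"
    using assms(3) by (rule parabolic_SL2Z_conj_scalar_translation)
  obtain \<alpha> b where \<alpha>: "\<alpha> \<in> SL2Z" "\<alpha>$2$1 = 0" and b: "1 \<le> b" "b \<le> n" "coprime b n"
    and h_factor: "mat2 L M 0 L = \<alpha> ** mat2 (int n) (int b) 0 (int n)"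
    using scalar_translation_normal_form[OF assms(1) Mset_conj_scalar_translation[OF assms(2) inv h]] .
  have "\<sigma> ** g = (\<sigma> ** g ** \<tau>) ** \<sigma>"
    by (simp add: inv matrix_mul_rid flip: matrix_mul_assoc)
  then have "\<sigma> ** g = \<alpha> ** mat2 (int n) (int b) 0 (int n) ** \<sigma>"
    by (simp add: h h_factor)
  moreover have "fixes_pt \<alpha> x y" if "fixes_pt (mat2 (int n) (int b) 0 (int n)) x y" for x y
    using fixes_pt_of_scalar_translation[OF _ \<alpha>(2) that] b(1) by simp
  ultimately have "parab_equiv g (mat2 (int n) (int b) 0 (int n))"
    unfolding parab_equiv_def using \<sigma> \<alpha>(1) by blast
  with b show ?thesis
    by (rule that)
qed

lemma scalar_translations_equiv_imp_eq:
  fixes n a b :: nat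
  assumes "1 \<le> a" "a \<le> n" "1 \<le> b" "b \<le> n"
    and "parab_equiv (mat2 (int n) (int a) 0 (int n)) (mat2 (int n) (int b) 0 (int n))"
  shows "a = b"
proof -
  obtain \<sigma> \<alpha> where \<sigma>: "\<sigma> \<in> SL2Z" and \<alpha>: "\<alpha> \<in> SL2Z"
    and stab: "\<And>x y. fixes_pt (mat2 (int n) (int b) 0 (int n)) x y \<Longrightarrow> fixes_pt \<alpha> x y"
    and conj: "\<sigma> ** mat2 (int n) (int a) 0 (int n) = \<alpha> ** mat2 (int n) (int b) 0 (int n) ** \<sigma>"
    using assms(5) unfolding parab_equiv_def by blast
  have "fixes_pt \<alpha> 1 0"
    using assms(3) by (intro stab) (simp add: fixes_pt_translation_iff)
  then have "\<alpha>$2$1 = 0"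
    by (simp add: fixes_pt_infinity_iff)
  with \<alpha> obtain e k where "e = 1 \<or> e = -1" "\<alpha> = mat2 e k 0 e"
    by (rule SL2Z_upper_triangular)
  with \<sigma> conj assms(1-4) have ab: "int a = int b + k * int n"
    by (intro SL2Z_conj_scalar_translation) auto
  have "k = 0"
  proof (rule ccontr)
    assume "k \<noteq> 0"
    then have "1 \<le> \<bar>k\<bar>"
      by linarith
    then have "int n \<le> \<bar>k * int n\<bar>"
      by (simp add: abs_mult mult_le_cancel_right1)
    with ab assms(1-4) show False
      by linarith
  qed
  with ab show ?thesis
    by simp
qed

theorem lemma4:
  fixes n :: nat
  assumes "n > 0"
  shows "(\<forall>a::nat. 1 \<le> a \<and> a \<le> n \<and> coprime a n \<longrightarrow>
            mat2 (int n) (int a) 0 (int n) \<in> Mset (int n ^ 2) \<and>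
            parabolic (mat2 (int n) (int a) 0 (int n)))
       \<and> (\<forall>g \<in> Mset (int n ^ 2). parabolic g \<longrightarrow>
            (\<exists>a::nat. 1 \<le> a \<and> a \<le> n \<and> coprime a n \<and>
                parab_equiv g (mat2 (int n) (int a) 0 (int n))))
       \<and> (\<forall>a b::nat. 1 \<le> a \<and> a \<le> n \<and> coprime a n \<and> 1 \<le> b \<and> b \<le> n \<and> coprime b n \<and>
            parab_equiv (mat2 (int n) (int a) 0 (int n)) (mat2 (int n) (int b) 0 (int n))
            \<longrightarrow> a = b)"
proof (intro conjI allI ballI impI)
  fix a :: nat
  assume a: "1 \<le> a \<and> a \<le> n \<and> coprime a n"
  then show "mat2 (int n) (int a) 0 (int n) \<in> Mset (int n ^ 2)"
    by (simp add: scalar_translation_in_Mset coprime_commute)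
  from a show "parabolic (mat2 (int n) (int a) 0 (int n))"
    by (simp add: parabolic_scalar_translation)
next
  fix g
  assume "g \<in> Mset (int n ^ 2)" "parabolic g"
  then show "\<exists>a. 1 \<le> a \<and> a \<le> n \<and> coprime a n \<and> parab_equiv g (mat2 (int n) (int a) 0 (int n))"
    using Mset_parabolic_equiv_scalar_translation[OF assms] by metis
next
  fix a b :: nat
  assume "1 \<le> a \<and> a \<le> n \<and> coprime a n \<and> 1 \<le> b \<and> b \<le> n \<and> coprime b n \<and>
    parab_equiv (mat2 (int n) (int a) 0 (int n)) (mat2 (int n) (int b) 0 (int n))"
  then show "a = b"
    using scalar_translations_equiv_imp_eq by blast
qed

end
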